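(* Under the setup in the context, assume in addition that the block GMRES residual $F_{j-1}^{(G)}$ has rank $L$. Then $H_j$ is singular with $\operatorname{rank}H_j=(j-1)L$ if and only if block GMRES totally stagnates at step $j$, i.e. $X_j^{(G)}=X_{j-1}^{(G)}$.
   Context: Let $n,L\ge1$, $A\in\mathbb C^{n\times n}$, $B,X_0\in\mathbb C^{n\times L}$, $F_0=B-AX_0$, and let $F_0=V_1S_0$ be a reduced QR factorization ($V_1\in\mathbb C^{n\times L}$ with orthonormal columns, $S_0\in\mathbb C^{L\times L}$ upper triangular). Fix $j\ge2$. The block Arnoldi process (possibly with dependent basis vectors replaced by new orthonormal vectors) yields $W_k=[V_1,\dots,V_k]\in\mathbb C^{n\times kL}$ ($k\le j+1$) with orthonormal columns, $V_i\in\mathbb C^{n\times L}$, and the block Arnoldi relation $AW_j=W_{j+1}\bar H_j$, where $\bar H_j=(H_{ik})\in\mathbb C^{(j+1)L\times jL}$ has $L\times L$ blocks $H_{ik}$, is block upper Hessenberg ($H_{ik}=0$ for $i>k+1$), and each $H_{k+1,k}$ is upper triangular. For $k\le j$, $\bar H_k$ denotes the leading $(k+1)L\times kL$ submatrix of $\bar H_j$ and $H_k$ the leading $kL\times kL$ submatrix. $E^{[m]}\in\mathbb R^{mL\times L}$ denotes the first $L$ columns of $I_{mL}$. Assume $\bar H_j$ has full column rank (hence so does each $\bar H_k$, $k\le j$). For $k\ge1$, the block GMRES iterate is $X_k^{(G)}=X_0+W_kY_k^{(G)}$, where $Y_k^{(G)}\in\mathbb C^{kL\times L}$ is the unique minimizer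 of $\|\bar H_kY-E^{[k+1]}S_0\|_F$ (Frobenius norm), and $F_k^{(G)}=B-AX_k^{(G)}$. *)

theory Defs
  imports "Jordan_Normal_Form.DL_Rank" "Jordan_Normal_Form.Schur_Decomposition"
begin

definition mrank :: "complex mat \<Rightarrow> nat" where
  "mrank M = vec_space.rank (dim_row M) M"

definition lead_sub :: "complex mat \<Rightarrow> nat \<Rightarrow> nat \<Rightarrow> complex mat" where
  "lead_sub M r c = mat r c (\<lambda>(i,k). M $$ (i,k))"

definition Emat :: "nat \<Rightarrow> nat \<Rightarrow> complex mat" where
  "Emat L m = mat (m*L) L (\<lambda>(i,k). if i = k then 1 else 0)"

definition frob_sq :: "complex mat \<Rightarrow> real" where
  "frob_sq M = (\<Sum>i<dim_row M. \<Sum>k<dim_col M. (cmod (M $$ (i,k)))\<^sup>2)"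

definition orthonormal_cols :: "complex mat \<Rightarrow> bool" where
  "orthonormal_cols W \<longleftrightarrow> mat_adjoint W * W = 1\<^sub>m (dim_col W)"

(* Hb ((j+1)L x jL) is block upper Hessenberg with L x L blocks, and every
   subdiagonal block H_{k+1,k} is upper triangular. Indices are 0-based. *)
definition block_hessenberg :: "nat \<Rightarrow> nat \<Rightarrow> complex mat \<Rightarrow> bool" where
  "block_hessenberg L j Hb \<longleftrightarrow>
     Hb \<in> carrier_mat ((j+1)*L) (j*L) \<and>
     (\<forall>r c. r < (j+1)*L \<longrightarrow> c < j*L \<longrightarrow> r div L > c div L + 1 \<longrightarrow> Hb $$ (r,c) = 0) \<and>
     (\<forall>r c. r < (j+1)*L \<longrightarrow> c < j*L \<longrightarrow> r div L = c div L + 1 \<longrightarrow> r mod L > c mod L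
            \<longrightarrow> Hb $$ (r,c) = 0)"

definition lsq_min :: "nat \<Rightarrow> complex mat \<Rightarrow> complex mat \<Rightarrow> nat \<Rightarrow> complex mat \<Rightarrow> bool" where
  "lsq_min L Hb S0 k Y \<longleftrightarrow>
     Y \<in> carrier_mat (k*L) L \<and>
     (\<forall>Y' \<in> carrier_mat (k*L) L.
        frob_sq (lead_sub Hb ((k+1)*L) (k*L) * Y - Emat L (k+1) * S0)
          \<le> frob_sq (lead_sub Hb ((k+1)*L) (k*L) * Y' - Emat L (k+1) * S0))"

end

theory Submission
  imports Defs
begin

(* Write m = jL and p = (j-1)L. Because Hbar_j is block Hessenberg, the first p columns of H_j
   are Hbar_{j-1}, so H_j = [Hbar_{j-1} | C]. Let R be the least-squares residual of step j-1.
   The normal equations give Hbar_{j-1}^H R = 0; Hbar_{j-1} has full column rank, and so has R,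
   because F_{j-1} = -W_j R has rank L. As p + L = m, C^m is the orthogonal sum of the ranges of
   Hbar_{j-1} and R, hence rank H_j = p iff the columns of C lie in the range of Hbar_{j-1} iff
   H_j^H R = 0. On the other hand, Y_{j-1} padded with zeros has residual [R; 0] in the problem of
   step j, so it satisfies the normal equations of step j (whose solution is unique) exactly when
   H_j^H R = 0; and it equals Y_j iff X_j = X_{j-1}, because W_j has orthonormal columns. *)

lemma index_mult_mat_sum:
  "A \<in> carrier_mat r k \<Longrightarrow> B \<in> carrier_mat k c \<Longrightarrow> i < r \<Longrightarrow> j < c \<Longrightarrow>
   (A * B) $$ (i,j) = (\<Sum>l<k. A $$ (i,l) * B $$ (l,j))"
  by (simp add: scalar_prod_def lessThan_atLeast0)

lemma index_mult_mat_vec_sum: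
  "A \<in> carrier_mat r k \<Longrightarrow> x \<in> carrier_vec k \<Longrightarrow> i < r \<Longrightarrow>
   (A *\<^sub>v x) $ i = (\<Sum>l<k. A $$ (i,l) * x $ l)"
  by (simp add: scalar_prod_def lessThan_atLeast0)

lemma mult_mat_vec_unit_vec:
  "(A :: 'a :: semiring_1 mat) \<in> carrier_mat r c \<Longrightarrow> k < c \<Longrightarrow> A *\<^sub>v unit_vec c k = col A k"
  by (rule eq_vecI) auto

lemma mat_adjoint_carrier: "A \<in> carrier_mat r c \<Longrightarrow> mat_adjoint A \<in> carrier_mat c r"
  by (auto simp: mat_adjoint_def mat_of_rows_def)

lemma index_mat_adjoint:
  "A \<in> carrier_mat r c \<Longrightarrow> i < c \<Longrightarrow> k < r \<Longrightarrow> mat_adjoint A $$ (i,k) = cnj (A $$ (k,i))"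
  by (simp add: mat_adjoint_def mat_of_rows_index)

lemma index_mat_adjoint_mult:
  assumes "A \<in> carrier_mat r a" "B \<in> carrier_mat r b" "i < a" "k < b"
  shows "(mat_adjoint A * B) $$ (i,k) = col B k \<bullet>c col A i"
  using assms by (simp add: mat_adjoint_def mat_of_rows_index comm_scalar_prod[of _ r])

lemma cscalar_prod_swap:
  "v \<in> carrier_vec n \<Longrightarrow> (w :: complex vec) \<in> carrier_vec n \<Longrightarrow> v \<bullet>c w = cnj (w \<bullet>c v)"
  using comm_scalar_prod[of w n "conjugate v"] conjugate_conjugate_sprod[of v n w] by simp

lemma sum3_swap:
  "(\<Sum>i<r. \<Sum>k<c'. \<Sum>l<c. f i k l) = (\<Sum>l<c. \<Sum>k<c'. \<Sum>i<r. (f i k l :: 'a :: comm_monoid_add))"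
proof -
  have "(\<Sum>i<r. \<Sum>k<c'. \<Sum>l<c. f i k l) = (\<Sum>i<r. \<Sum>l<c. \<Sum>k<c'. f i k l)"
    by (rule sum.cong[OF refl], rule sum.swap)
  also have "\<dots> = (\<Sum>l<c. \<Sum>i<r. \<Sum>k<c'. f i k l)" by (rule sum.swap)
  also have "\<dots> = (\<Sum>l<c. \<Sum>k<c'. \<Sum>i<r. f i k l)"
    by (rule sum.cong[OF refl], rule sum.swap)
  finally show ?thesis .
qed

lemma adjoint_mult_eq_0_imp_cscalar_prod_eq_0:
  fixes A B :: "complex mat"
  assumes A: "A \<in> carrier_mat r a" and B: "B \<in> carrier_mat r b"
    and x: "x \<in> carrier_vec a" and y: "y \<in> carrier_vec b"
    and AB: "mat_adjoint A * B = 0\<^sub>m a b"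
  shows "(A *\<^sub>v x) \<bullet>c (B *\<^sub>v y) = 0"
proof -
  have AB_sum: "(\<Sum>i<r. cnj (A $$ (i,c)) * B $$ (i,k)) = 0" if "c < a" "k < b" for c k
    using AB index_mult_mat_sum[OF mat_adjoint_carrier[OF A] B that] index_mat_adjoint[OF A] that
    by (metis (no_types, lifting) index_zero_mat(1) lessThan_iff sum.cong)
  have "(A *\<^sub>v x) \<bullet>c (B *\<^sub>v y) = (\<Sum>i<r. (A *\<^sub>v x) $ i * cnj ((B *\<^sub>v y) $ i))"
    using A B by (simp add: scalar_prod_def lessThan_atLeast0)
  also have "\<dots> = (\<Sum>i<r. \<Sum>k<b. \<Sum>c<a. A $$ (i,c) * x $ c * (cnj (B $$ (i,k)) * cnj (y $ k)))"
    by (rule sum.cong[OF refl])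
       (simp add: index_mult_mat_vec_sum[OF A x] index_mult_mat_vec_sum[OF B y] cnj_sum
         sum_distrib_left sum_distrib_right)
  also have "\<dots> = (\<Sum>c<a. \<Sum>k<b. \<Sum>i<r. A $$ (i,c) * x $ c * (cnj (B $$ (i,k)) * cnj (y $ k)))"
    by (rule sum3_swap)
  also have "\<dots> = (\<Sum>c<a. \<Sum>k<b. x $ c * cnj (y $ k) * cnj (\<Sum>i<r. cnj (A $$ (i,c)) * B $$ (i,k)))"
    by (rule sum.cong[OF refl], rule sum.cong[OF refl]) (simp add: cnj_sum sum_distrib_left mult_ac)
  also have "\<dots> = 0" using AB_sum by simp
  finally show ?thesis .
qed

definition append_cols :: "'a mat \<Rightarrow> 'a mat \<Rightarrow> 'a mat" (infixr \<open>@\<^sub>c\<close> 65) where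
  "A @\<^sub>c B = mat (dim_row A) (dim_col A + dim_col B)
     (\<lambda>(i,k). if k < dim_col A then A $$ (i,k) else B $$ (i, k - dim_col A))"

lemma dim_append_cols[simp]:
  "dim_row (A @\<^sub>c B) = dim_row A" "dim_col (A @\<^sub>c B) = dim_col A + dim_col B"
  by (simp_all add: append_cols_def)

lemma append_cols_carrier[simp]:
  "A \<in> carrier_mat r a \<Longrightarrow> B \<in> carrier_mat r b \<Longrightarrow> A @\<^sub>c B \<in> carrier_mat r (a + b)"
  by (auto simp: append_cols_def)

lemma col_append_cols:
  assumes "A \<in> carrier_mat r a" "B \<in> carrier_mat r b" "k < a + b"
  shows "col (A @\<^sub>c B) k = (if k < a then col A k else col B (k - a))"
  using assms by (auto intro!: eq_vecI simp: append_cols_def)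

lemma cols_append_cols:
  assumes "A \<in> carrier_mat r a" "B \<in> carrier_mat r b"
  shows "cols (A @\<^sub>c B) = cols A @ cols B"
  using assms by (intro nth_equalityI) (auto simp: col_append_cols nth_append append_cols_def)

lemma append_cols_mult_vec:
  assumes A: "A \<in> carrier_mat r a" and B: "B \<in> carrier_mat r b"
    and x: "x \<in> carrier_vec a" and y: "y \<in> carrier_vec b"
  shows "(A @\<^sub>c B) *\<^sub>v (x @\<^sub>v y) = A *\<^sub>v x + B *\<^sub>v y"
proof (rule eq_vecI)
  fix i assume "i < dim_vec (A *\<^sub>v x + B *\<^sub>v y)"
  then have i: "i < r" using B by simp
  have "row (A @\<^sub>c B) i = row A i @\<^sub>v row B i"
    using A B i by (auto intro!: eq_vecI simp: append_cols_def)
  then show "((A @\<^sub>c B) *\<^sub>v (x @\<^sub>v y)) $ i = (A *\<^sub>v x + B *\<^sub>v y) $ i"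
    using A B x y i by (simp add: scalar_prod_append[of _ a _ b])
qed (use A B in simp)

section \<open>Matrices with trivial kernel\<close>

definition trivial_kernel :: "'a :: semiring_0 mat \<Rightarrow> bool" where
  "trivial_kernel A \<longleftrightarrow>
     (\<forall>x \<in> carrier_vec (dim_col A). A *\<^sub>v x = 0\<^sub>v (dim_row A) \<longrightarrow> x = 0\<^sub>v (dim_col A))"

lemma trivial_kernelI:
  assumes "A \<in> carrier_mat r c" "\<And>x. x \<in> carrier_vec c \<Longrightarrow> A *\<^sub>v x = 0\<^sub>v r \<Longrightarrow> x = 0\<^sub>v c"
  shows "trivial_kernel A"
  using assms by (auto simp: trivial_kernel_def)

lemma trivial_kernelD:
  assumes "trivial_kernel A" "A \<in> carrier_mat r c" "x \<in> carrier_vec c" "A *\<^sub>v x = 0\<^sub>v r"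
  shows "x = 0\<^sub>v c"
  using assms by (auto simp: trivial_kernel_def)

lemma trivial_kernel_distinct_cols:
  assumes A: "(A :: 'a :: field mat) \<in> carrier_mat r c" and ker: "trivial_kernel A"
  shows "distinct (cols A)"
proof -
  have "i = k" if ik: "i < c" "k < c" "col A i = col A k" for i k
  proof -
    have "A *\<^sub>v (unit_vec c i - unit_vec c k) = col A i - col A k"
      using A ik by (simp add: mult_minus_distrib_mat_vec mult_mat_vec_unit_vec)
    also have "\<dots> = 0\<^sub>v r" using A ik by simp
    finally have "A *\<^sub>v (unit_vec c i - unit_vec c k) = 0\<^sub>v r" .
    then have "(unit_vec c i - unit_vec c k :: 'a vec) = 0\<^sub>v c"
      by (intro trivial_kernelD[OF ker A]) simp_all
    then have "(unit_vec c i - unit_vec c k) $ i = (0 :: 'a)" using ik by simp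
    then show "i = k" using ik by (auto split: if_splits)
  qed
  then show ?thesis using A by (auto simp: distinct_conv_nth)
qed

lemma invertible_mat_trivial_kernel:
  assumes H: "(H :: 'a :: comm_ring_1 mat) \<in> carrier_mat m m" and inv: "invertible_mat H"
  shows "trivial_kernel H"
proof (rule trivial_kernelI[OF H])
  fix x assume x: "x \<in> carrier_vec m" and Hx: "H *\<^sub>v x = 0\<^sub>v m"
  obtain H' where H1: "H * H' = 1\<^sub>m (dim_row H)" and H2: "H' * H = 1\<^sub>m (dim_row H')"
    using inv unfolding invertible_mat_def inverts_mat_def by blast
  have H': "H' \<in> carrier_mat m m"
    using H1 H2 H by (metis carrier_matD carrier_matI index_mult_mat(3) index_one_mat(3))
  have "x = (H' * H) *\<^sub>v x" using H2 H' x by simp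
  also have "\<dots> = H' *\<^sub>v (H *\<^sub>v x)" using H' H x by (simp add: assoc_mult_mat_vec)
  also have "\<dots> = 0\<^sub>v m" using Hx H' by (auto intro!: eq_vecI simp: scalar_prod_def)
  finally show "x = 0\<^sub>v m" .
qed

context vec_space
begin

lemma trivial_kernel_lin_indpt:
  assumes A: "A \<in> carrier_mat n c" and ker: "trivial_kernel A"
  shows "lin_indpt (set (cols A))"
proof
  assume "lin_dep (set (cols A))"
  then obtain v where "v \<in> carrier_vec c" "v \<noteq> 0\<^sub>v c" "A *\<^sub>v v = 0\<^sub>v n"
    using lin_depE[OF A _ trivial_kernel_distinct_cols[OF A ker]] by blast
  then show False using trivial_kernelD[OF ker A] by blast
qed

lemma rank_eq_dim_col_iff_trivial_kernel:
  assumes A: "A \<in> carrier_mat n c"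
  shows "rank A = c \<longleftrightarrow> trivial_kernel A"
proof
  assume ker: "trivial_kernel A"
  show "rank A = c"
    by (rule lin_indpt_full_rank[OF A trivial_kernel_distinct_cols[OF A ker] trivial_kernel_lin_indpt[OF A ker]])
next
  assume rk: "rank A = c"
  have dist: "distinct (cols A)"
  proof (rule ccontr)
    assume nd: "\<not> distinct (cols A)"
    obtain S where S: "maximal S (\<lambda>T. T \<subseteq> set (cols A) \<and> lin_indpt T)"
      using maximal_exists[of "\<lambda>T. T \<subseteq> set (cols A) \<and> lin_indpt T" "card (set (cols A))" "{}"]
      by (meson List.finite_set card_mono empty_iff empty_subsetI finite_lin_indpt2 rev_finite_subset)
    then have "card S \<le> card (set (cols A))" by (simp add: card_mono maximal_def)
    moreover have "card (set (cols A)) < c"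
      using nd A card_distinct[of "cols A"] card_length[of "cols A"] by fastforce
    ultimately show False using rank_card_indpt[OF A S] rk by simp
  qed
  then have "lin_indpt (set (cols A))" using full_rank_lin_indpt A rk by blast
  then show "trivial_kernel A"
    using lin_depI[OF A _ _ _ dist] by (blast intro: trivial_kernelI[OF A])
qed

lemma trivial_kernel_imp_surj:
  fixes A :: "'a mat"
  assumes A: "A \<in> carrier_mat n n" and ker: "trivial_kernel A" and v: "v \<in> carrier_vec n"
  obtains x where "x \<in> carrier_vec n" "A *\<^sub>v x = v"
proof -
  have sub: "set (cols A) \<subseteq> carrier_vec n" using A cols_dim by blast
  have "basis (set (cols A))"
    by (rule dim_li_is_basis)
       (use sub trivial_kernel_lin_indpt[OF A ker] trivial_kernel_distinct_cols[OF A ker] A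
         in \<open>auto simp: distinct_card dim_is_n\<close>)
  then have "v \<in> col_space A" using v by (simp add: basis_def col_space_def)
  then show ?thesis using col_space_eq[OF A] A that by auto
qed

lemma trivial_kernel_append_col:
  fixes A :: "'a mat"
  assumes A: "A \<in> carrier_mat n a" and ker: "trivial_kernel A"
    and v: "v \<in> carrier_vec n" and nv: "v \<notin> (*\<^sub>v) A ` carrier_vec a"
  shows "trivial_kernel (A @\<^sub>c mat_of_cols n [v])"
proof (rule trivial_kernelI)
  show "A @\<^sub>c mat_of_cols n [v] \<in> carrier_mat n (a + 1)"
    using append_cols_carrier[OF A mat_of_cols_carrier(1)[of n "[v]"]] by simp
  fix z assume z: "z \<in> carrier_vec (a + 1)" and Kz: "(A @\<^sub>c mat_of_cols n [v]) *\<^sub>v z = 0\<^sub>v n"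
  define x where "x = vec_first z a"
  define t where "t = z $ a"
  have x: "x \<in> carrier_vec a" by (simp add: x_def)
  have z_eq: "z = x @\<^sub>v vec 1 (\<lambda>_. t)"
    using z by (auto intro!: eq_vecI simp: x_def t_def vec_first_def less_Suc_eq)
  have "mat_of_cols n [v] *\<^sub>v vec 1 (\<lambda>_. t) = t \<cdot>\<^sub>v v"
    using v by (auto intro!: eq_vecI simp: mat_of_cols_def scalar_prod_def mult.commute)
  then have Axt0: "A *\<^sub>v x + t \<cdot>\<^sub>v v = 0\<^sub>v n"
    using Kz append_cols_mult_vec[OF A mat_of_cols_carrier(1)[of n "[v]"] x, of "vec 1 (\<lambda>_. t)"] z_eq
    by simp
  have Axt: "(A *\<^sub>v x) $ i + t * v $ i = 0" if "i < n" for i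
  proof -
    have "(A *\<^sub>v x + t \<cdot>\<^sub>v v) $ i = 0\<^sub>v n $ i" by (simp only: Axt0)
    then show ?thesis using that A v by simp
  qed
  have t0: "t = 0"
  proof (rule ccontr)
    assume "t \<noteq> 0"
    then have "v = A *\<^sub>v ((- 1 / t) \<cdot>\<^sub>v x)"
      using Axt A x v by (intro eq_vecI) (auto simp: mult_mat_vec field_simps eq_neg_iff_add_eq_0)
    moreover have "(- 1 / t) \<cdot>\<^sub>v x \<in> carrier_vec a" using x by simp
    ultimately show False using nv by blast
  qed
  have "A *\<^sub>v x = 0\<^sub>v n"
  proof (rule eq_vecI)
    fix i assume "i < dim_vec (0\<^sub>v n :: 'a vec)"
    then show "(A *\<^sub>v x) $ i = 0\<^sub>v n $ i" using Axt[of i] t0 by simp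
  qed (use A in simp)
  then have x0: "x = 0\<^sub>v a" by (rule trivial_kernelD[OF ker A x])
  show "z = 0\<^sub>v (a + 1)" unfolding z_eq x0 t0 by (rule eq_vecI) auto
qed

lemma rank_append_cols_eq_iff:
  assumes A: "A \<in> carrier_mat n a" and C: "C \<in> carrier_mat n c" and ker: "trivial_kernel A"
  shows "rank (A @\<^sub>c C) = a \<longleftrightarrow> set (cols C) \<subseteq> (*\<^sub>v) A ` carrier_vec a"
proof
  assume CA: "set (cols C) \<subseteq> (*\<^sub>v) A ` carrier_vec a"
  have subA: "set (cols A) \<subseteq> carrier_vec n" using A cols_dim by blast
  have subC: "set (cols C) \<subseteq> carrier_vec n" using C cols_dim by blast
  have "set (cols C) \<subseteq> span (set (cols A))"
    using CA col_space_eq[OF A] A by (auto simp: col_space_def)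
  then have "set (cols A) \<union> set (cols C) \<subseteq> span (set (cols A))"
    using in_own_span[OF subA] by blast
  then have "span (set (cols A) \<union> set (cols C)) \<subseteq> span (set (cols A))"
    by (rule span_subsetI[OF subA])
  moreover have "span (set (cols A)) \<subseteq> span (set (cols A) \<union> set (cols C))"
    by (rule span_is_monotone) blast
  ultimately have "span (set (cols (A @\<^sub>c C))) = span (set (cols A))"
    using cols_append_cols[OF A C] by auto
  then have "rank (A @\<^sub>c C) = rank A" by (simp add: rank_def)
  then show "rank (A @\<^sub>c C) = a" using rank_eq_dim_col_iff_trivial_kernel[OF A] ker by simp
next
  assume rk: "rank (A @\<^sub>c C) = a"
  show "set (cols C) \<subseteq> (*\<^sub>v) A ` carrier_vec a"
  proof (rule ccontr)
    assume "\<not> ?thesis"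
    then obtain v where vC: "v \<in> set (cols C)" and nv: "v \<notin> (*\<^sub>v) A ` carrier_vec a" by blast
    have v: "v \<in> carrier_vec n" using vC C cols_dim by blast
    define K where "K = A @\<^sub>c mat_of_cols n [v]"
    have K: "K \<in> carrier_mat n (a + 1)"
      using append_cols_carrier[OF A mat_of_cols_carrier(1)[of n "[v]"]] by (simp add: K_def)
    have kK: "trivial_kernel K" unfolding K_def by (rule trivial_kernel_append_col[OF A ker v nv])
    have "set (cols K) \<subseteq> set (cols (A @\<^sub>c C))"
      using vC v cols_append_cols[OF A C] cols_append_cols[OF A mat_of_cols_carrier(1)]
      by (auto simp: K_def)
    then have "card (set (cols K)) \<le> rank (A @\<^sub>c C)"
      using rank_ge_card_indpt[OF append_cols_carrier[OF A C]] trivial_kernel_lin_indpt[OF K kK]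
      by blast
    moreover have "card (set (cols K)) = a + 1"
      using distinct_card[OF trivial_kernel_distinct_cols[OF K kK]] K by simp
    ultimately show False using rk by simp
  qed
qed

end

section \<open>Orthogonal column blocks\<close>

lemma trivial_kernel_append_cols_orthogonal:
  fixes A R :: "complex mat"
  assumes A: "A \<in> carrier_mat r a" and R: "R \<in> carrier_mat r b"
    and kA: "trivial_kernel A" and kR: "trivial_kernel R" and AR: "mat_adjoint A * R = 0\<^sub>m a b"
  shows "trivial_kernel (A @\<^sub>c R)"
proof (rule trivial_kernelI[OF append_cols_carrier[OF A R]])
  fix z assume z: "z \<in> carrier_vec (a + b)" and Mz: "(A @\<^sub>c R) *\<^sub>v z = 0\<^sub>v r"
  define x where "x = vec_first z a"
  define y where "y = vec_last z b"
  have x: "x \<in> carrier_vec a" and y: "y \<in> carrier_vec b" by (simp_all add: x_def y_def)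
  have z_eq: "z = x @\<^sub>v y" using z by (simp add: x_def y_def)
  have sum0: "A *\<^sub>v x + R *\<^sub>v y = 0\<^sub>v r"
    using Mz append_cols_mult_vec[OF A R x y] z_eq by simp
  have "(R *\<^sub>v y) \<bullet>c (R *\<^sub>v y) = (A *\<^sub>v x + R *\<^sub>v y) \<bullet>c (R *\<^sub>v y) - (A *\<^sub>v x) \<bullet>c (R *\<^sub>v y)"
    using A R x y by (simp add: add_scalar_prod_distrib[of _ r])
  also have "\<dots> = 0"
    using sum0 adjoint_mult_eq_0_imp_cscalar_prod_eq_0[OF A R x y AR] R y by simp
  finally have Ry: "R *\<^sub>v y = 0\<^sub>v r"
    using conjugate_square_eq_0_vec[of "R *\<^sub>v y" r] R y by simp
  then have y0: "y = 0\<^sub>v b" by (rule trivial_kernelD[OF kR R y])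
  have "A *\<^sub>v x = 0\<^sub>v r" using sum0 Ry A x by simp
  then have x0: "x = 0\<^sub>v a" by (rule trivial_kernelD[OF kA A x])
  show "z = 0\<^sub>v (a + b)" unfolding z_eq x0 y0 by (rule eq_vecI) auto
qed

lemma orthogonal_decomposition:
  fixes A R :: "complex mat"
  assumes A: "A \<in> carrier_mat m a" and R: "R \<in> carrier_mat m b" and dim: "a + b = m"
    and kA: "trivial_kernel A" and kR: "trivial_kernel R" and AR: "mat_adjoint A * R = 0\<^sub>m a b"
    and w: "w \<in> carrier_vec m"
  obtains x y where "x \<in> carrier_vec a" "y \<in> carrier_vec b" "w = A *\<^sub>v x + R *\<^sub>v y"
proof -
  interpret V: vec_space "TYPE(complex)" m .
  have M: "A @\<^sub>c R \<in> carrier_mat m m" using append_cols_carrier[OF A R] dim by simp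
  obtain z where z: "z \<in> carrier_vec m" and Mz: "(A @\<^sub>c R) *\<^sub>v z = w"
    using V.trivial_kernel_imp_surj[OF M trivial_kernel_append_cols_orthogonal[OF A R kA kR AR] w] .
  have "z = vec_first z a @\<^sub>v vec_last z b" using z dim by simp
  then have "w = A *\<^sub>v vec_first z a + R *\<^sub>v vec_last z b"
    using Mz append_cols_mult_vec[OF A R vec_first_carrier vec_last_carrier] by metis
  then show ?thesis by (rule that[OF vec_first_carrier vec_last_carrier])
qed

lemma cols_in_range_iff_adjoint_mult_eq_0:
  fixes A R C :: "complex mat"
  assumes A: "A \<in> carrier_mat m a" and R: "R \<in> carrier_mat m b" and C: "C \<in> carrier_mat m c"
    and dim: "a + b = m" and kA: "trivial_kernel A" and kR: "trivial_kernel R"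
    and AR: "mat_adjoint A * R = 0\<^sub>m a b"
  shows "set (cols C) \<subseteq> (*\<^sub>v) A ` carrier_vec a \<longleftrightarrow> mat_adjoint C * R = 0\<^sub>m c b"
proof
  assume CA: "set (cols C) \<subseteq> (*\<^sub>v) A ` carrier_vec a"
  show "mat_adjoint C * R = 0\<^sub>m c b"
  proof (rule eq_matI)
    fix i k assume "i < dim_row (0\<^sub>m c b :: complex mat)" "k < dim_col (0\<^sub>m c b :: complex mat)"
    then have i: "i < c" and k: "k < b" by auto
    have "col C i \<in> set (cols C)" using nth_mem[of i "cols C"] C i by simp
    then have "col C i \<in> (*\<^sub>v) A ` carrier_vec a" by (rule subsetD[OF CA])
    then obtain x where x: "x \<in> carrier_vec a" and Ci: "col C i = A *\<^sub>v x" by blast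
    have "(mat_adjoint C * R) $$ (i,k) = (R *\<^sub>v unit_vec b k) \<bullet>c (A *\<^sub>v x)"
      using index_mat_adjoint_mult[OF C R i k] Ci mult_mat_vec_unit_vec[OF R k] by simp
    also have "\<dots> = 0"
      using cscalar_prod_swap[of "R *\<^sub>v unit_vec b k" m "A *\<^sub>v x"]
        adjoint_mult_eq_0_imp_cscalar_prod_eq_0[OF A R x unit_vec_carrier AR] A R x by simp
    finally show "(mat_adjoint C * R) $$ (i,k) = 0\<^sub>m c b $$ (i,k)" using i k by simp
  qed (use mat_adjoint_carrier[OF C] R in auto)
next
  assume CR: "mat_adjoint C * R = 0\<^sub>m c b"
  show "set (cols C) \<subseteq> (*\<^sub>v) A ` carrier_vec a"
  proof
    fix v assume "v \<in> set (cols C)"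
    then obtain i where i: "i < c" and vi: "v = col C i" using C by (auto simp: in_set_conv_nth)
    have v: "v \<in> carrier_vec m" using C i vi by simp
    obtain x y where x: "x \<in> carrier_vec a" and y: "y \<in> carrier_vec b" and vxy: "v = A *\<^sub>v x + R *\<^sub>v y"
      using orthogonal_decomposition[OF A R dim kA kR AR v] .
    have "(R *\<^sub>v y) \<bullet>c (R *\<^sub>v y) = v \<bullet>c (R *\<^sub>v y) - (A *\<^sub>v x) \<bullet>c (R *\<^sub>v y)"
      unfolding vxy using A R x y by (simp add: add_scalar_prod_distrib[of _ m])
    also have "\<dots> = 0"
      using adjoint_mult_eq_0_imp_cscalar_prod_eq_0[OF C R unit_vec_carrier y CR, of i]
        adjoint_mult_eq_0_imp_cscalar_prod_eq_0[OF A R x y AR] mult_mat_vec_unit_vec[OF C i] vi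
      by simp
    finally have "R *\<^sub>v y = 0\<^sub>v m"
      using conjugate_square_eq_0_vec[of "R *\<^sub>v y" m] R y by simp
    then have "v = A *\<^sub>v x" using vxy A x by simp
    then show "v \<in> (*\<^sub>v) A ` carrier_vec a" using x by (rule image_eqI)
  qed
qed

lemma adjoint_append_cols_mult_eq_0_iff:
  fixes A C R :: "complex mat"
  assumes A: "A \<in> carrier_mat m a" and C: "C \<in> carrier_mat m c" and R: "R \<in> carrier_mat m b"
  shows "mat_adjoint (A @\<^sub>c C) * R = 0\<^sub>m (a + c) b \<longleftrightarrow>
         mat_adjoint A * R = 0\<^sub>m a b \<and> mat_adjoint C * R = 0\<^sub>m c b"
proof -
  have entry: "(mat_adjoint (A @\<^sub>c C) * R) $$ (i,k) =
      (if i < a then (mat_adjoint A * R) $$ (i,k) else (mat_adjoint C * R) $$ (i - a, k))"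
    if "i < a + c" "k < b" for i k
    using index_mat_adjoint_mult[OF append_cols_carrier[OF A C] R that]
      index_mat_adjoint_mult[OF A R _ that(2)] index_mat_adjoint_mult[OF C R _ that(2)]
      col_append_cols[OF A C that(1)] that by (cases "i < a") simp_all
  have AC: "mat_adjoint (A @\<^sub>c C) * R \<in> carrier_mat (a + c) b"
    using mat_adjoint_carrier[OF append_cols_carrier[OF A C]] R by simp
  have AR: "mat_adjoint A * R \<in> carrier_mat a b" and CR: "mat_adjoint C * R \<in> carrier_mat c b"
    using mat_adjoint_carrier[OF A] mat_adjoint_carrier[OF C] R by simp_all
  show ?thesis
  proof (intro iffI conjI)
    assume Z: "mat_adjoint (A @\<^sub>c C) * R = 0\<^sub>m (a + c) b"
    show "mat_adjoint A * R = 0\<^sub>m a b"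
    proof (rule eq_matI)
      fix i k assume "i < dim_row (0\<^sub>m a b :: complex mat)" "k < dim_col (0\<^sub>m a b :: complex mat)"
      then have ik: "i < a" "k < b" by auto
      show "(mat_adjoint A * R) $$ (i,k) = 0\<^sub>m a b $$ (i,k)"
        using entry[of i k] Z ik by simp
    qed (use AR in auto)
    show "mat_adjoint C * R = 0\<^sub>m c b"
    proof (rule eq_matI)
      fix i k assume "i < dim_row (0\<^sub>m c b :: complex mat)" "k < dim_col (0\<^sub>m c b :: complex mat)"
      then have ik: "i < c" "k < b" by auto
      show "(mat_adjoint C * R) $$ (i,k) = 0\<^sub>m c b $$ (i,k)"
        using entry[of "a + i" k] Z ik by simp
    qed (use CR in auto)
  next
    assume "mat_adjoint A * R = 0\<^sub>m a b \<and> mat_adjoint C * R = 0\<^sub>m c b"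
    then show "mat_adjoint (A @\<^sub>c C) * R = 0\<^sub>m (a + c) b"
      by (intro eq_matI) (use AC entry in auto)
  qed
qed

theorem rank_append_cols_iff_adjoint_mult_eq_0:
  fixes A R C :: "complex mat"
  assumes A: "A \<in> carrier_mat m a" and R: "R \<in> carrier_mat m b" and C: "C \<in> carrier_mat m c"
    and dim: "a + b = m" and kA: "trivial_kernel A" and kR: "trivial_kernel R"
    and AR: "mat_adjoint A * R = 0\<^sub>m a b"
  shows "vec_space.rank m (A @\<^sub>c C) = a \<longleftrightarrow> mat_adjoint (A @\<^sub>c C) * R = 0\<^sub>m (a + c) b"
  using vec_space.rank_append_cols_eq_iff[OF A C kA] cols_in_range_iff_adjoint_mult_eq_0[OF A R C dim kA kR AR]
    adjoint_append_cols_mult_eq_0_iff[OF A C R] AR by simp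

section \<open>Least squares in the Frobenius norm\<close>

definition frob_inner :: "complex mat \<Rightarrow> complex mat \<Rightarrow> complex" where
  "frob_inner X Y = (\<Sum>i<dim_row X. \<Sum>k<dim_col X. cnj (X $$ (i,k)) * Y $$ (i,k))"

lemma Re_cnj_mult_self: "Re (cnj z * z) = (cmod z)\<^sup>2"
  by (simp only: cmod_power2) (simp add: power2_eq_square)

lemma frob_sq_eq_Re_frob_inner: "frob_sq X = Re (frob_inner X X)"
  unfolding frob_sq_def frob_inner_def by (simp only: Re_sum Re_cnj_mult_self)

lemma frob_sq_nonneg: "0 \<le> frob_sq X"
  unfolding frob_sq_def by (intro sum_nonneg) auto

lemma frob_sq_eq_0_iff:
  assumes X: "X \<in> carrier_mat r c"
  shows "frob_sq X = 0 \<longleftrightarrow> X = 0\<^sub>m r c"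
proof
  assume "frob_sq X = 0"
  then have "\<forall>i\<in>{..<r}. \<forall>k\<in>{..<c}. (cmod (X $$ (i,k)))\<^sup>2 = 0"
    using X unfolding frob_sq_def by (simp add: sum_nonneg_eq_0_iff sum_nonneg)
  then show "X = 0\<^sub>m r c" using X by (intro eq_matI) auto
qed (simp add: frob_sq_def)

lemma frob_inner_mult_right:
  assumes X: "X \<in> carrier_mat r q" and A: "A \<in> carrier_mat r c" and D: "D \<in> carrier_mat c q"
  shows "frob_inner X (A * D) = frob_inner (mat_adjoint A * X) D"
proof -
  have AH: "mat_adjoint A \<in> carrier_mat c r" by (rule mat_adjoint_carrier[OF A])
  have "frob_inner X (A * D) = (\<Sum>i<r. \<Sum>k<q. \<Sum>l<c. cnj (X $$ (i,k)) * A $$ (i,l) * D $$ (l,k))"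
    unfolding frob_inner_def using X
    by (auto intro!: sum.cong simp: index_mult_mat_sum[OF A D] sum_distrib_left mult.assoc)
  also have "\<dots> = (\<Sum>l<c. \<Sum>k<q. \<Sum>i<r. cnj (X $$ (i,k)) * A $$ (i,l) * D $$ (l,k))"
    by (rule sum3_swap)
  also have "\<dots> = (\<Sum>l<c. \<Sum>k<q. cnj ((mat_adjoint A * X) $$ (l,k)) * D $$ (l,k))"
    by (rule sum.cong[OF refl], rule sum.cong[OF refl])
       (simp add: index_mult_mat_sum[OF AH X] index_mat_adjoint[OF A] sum_distrib_right
         sum_distrib_left mult.commute mult.left_commute)
  also have "\<dots> = frob_inner (mat_adjoint A * X) D" using AH X by (simp add: frob_inner_def)
  finally show ?thesis .
qed

lemma frob_sq_diff_smult:
  assumes R: "R \<in> carrier_mat r q" and Q: "Q \<in> carrier_mat r q"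
  shows "frob_sq (R - complex_of_real t \<cdot>\<^sub>m Q)
       = frob_sq R - 2 * t * Re (frob_inner R Q) + t\<^sup>2 * frob_sq Q"
proof -
  have cmod_diff: "(cmod (u - complex_of_real t * v))\<^sup>2
      = (cmod u)\<^sup>2 - 2 * t * Re (cnj u * v) + t\<^sup>2 * (cmod v)\<^sup>2" for u v
    by (simp only: cmod_power2) (simp add: power2_eq_square algebra_simps)
  have "frob_sq (R - complex_of_real t \<cdot>\<^sub>m Q)
      = (\<Sum>i<r. \<Sum>k<q. (cmod (R $$ (i,k)))\<^sup>2 - 2 * t * Re (cnj (R $$ (i,k)) * Q $$ (i,k))
                        + t\<^sup>2 * (cmod (Q $$ (i,k)))\<^sup>2)"
    unfolding frob_sq_def using R Q by (simp add: cmod_diff)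
  also have "\<dots> = frob_sq R - 2 * t * Re (frob_inner R Q) + t\<^sup>2 * frob_sq Q"
    unfolding frob_sq_def frob_inner_def
    by (simp only: carrier_matD[OF R] carrier_matD[OF Q] Re_sum sum.distrib sum_subtractf sum_distrib_left[symmetric])
  finally show ?thesis .
qed

(* Moving Y by -t A^H (AY - B) changes the squared residual by -2t |A^H (AY - B)|^2 + O(t^2). *)
lemma frob_min_imp_normal_equation:
  assumes A: "A \<in> carrier_mat r c" and B: "B \<in> carrier_mat r q" and Y: "Y \<in> carrier_mat c q"
    and min: "\<forall>Y' \<in> carrier_mat c q. frob_sq (A * Y - B) \<le> frob_sq (A * Y' - B)"
  shows "mat_adjoint A * (A * Y - B) = 0\<^sub>m c q"
proof -
  define R where "R = A * Y - B"
  define D where "D = mat_adjoint A * R"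
  have R: "R \<in> carrier_mat r q" using A Y B by (simp add: R_def minus_carrier_mat)
  have D: "D \<in> carrier_mat c q" using mat_adjoint_carrier[OF A] R by (simp add: D_def)
  have AD: "A * D \<in> carrier_mat r q" using A D by simp
  have descent: "frob_sq R \<le> frob_sq R - 2 * t * frob_sq D + t\<^sup>2 * frob_sq (A * D)" for t :: real
  proof -
    have "A * (Y - complex_of_real t \<cdot>\<^sub>m D) - B = R - complex_of_real t \<cdot>\<^sub>m (A * D)"
      using A Y B D by (intro eq_matI)
        (auto simp: R_def mult_minus_distrib_mat[OF A Y] mult_smult_distrib[OF A D])
    moreover have "Re (frob_inner R (A * D)) = frob_sq D"
      using frob_inner_mult_right[OF R A D] by (simp add: D_def frob_sq_eq_Re_frob_inner)
    moreover have "Y - complex_of_real t \<cdot>\<^sub>m D \<in> carrier_mat c q"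
      using D by (simp add: minus_carrier_mat)
    ultimately show ?thesis
      using min frob_sq_diff_smult[OF R AD, of t] by (fastforce simp: R_def)
  qed
  have "frob_sq D = 0"
  proof (rule ccontr)
    assume "frob_sq D \<noteq> 0"
    then have pos: "frob_sq D > 0" using frob_sq_nonneg[of D] by simp
    define t where "t = frob_sq D / (frob_sq (A * D) + 1)"
    have t: "t > 0" using pos frob_sq_nonneg[of "A * D"] by (simp add: t_def)
    have "2 * t * frob_sq D \<le> t\<^sup>2 * frob_sq (A * D)" using descent[of t] by simp
    then have "2 * frob_sq D \<le> t * frob_sq (A * D)" using t by (simp add: power2_eq_square)
    also have "\<dots> < frob_sq D" using pos frob_sq_nonneg[of "A * D"] by (simp add: t_def field_simps)
    finally show False using pos by simp
  qed
  then show ?thesis using frob_sq_eq_0_iff[OF D] by (simp add: D_def R_def)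
qed

lemma mult_eq_0_imp_eq_0:
  assumes A: "A \<in> carrier_mat r c" and ker: "trivial_kernel A"
    and D: "D \<in> carrier_mat c q" and AD: "A * D = 0\<^sub>m r q"
  shows "D = 0\<^sub>m c q"
proof (rule mat_col_eqI)
  fix k assume "k < dim_col (0\<^sub>m c q :: 'a mat)"
  then have k: "k < q" by simp
  have "A *\<^sub>v col D k = col (A * D) k" by (rule col_mult2[OF A D k, symmetric])
  also have "\<dots> = 0\<^sub>v r" using AD k by (auto intro!: eq_vecI)
  finally have "col D k = 0\<^sub>v c" by (intro trivial_kernelD[OF ker A]) (use D in \<open>auto intro: carrier_vecI\<close>)
  then show "col D k = col (0\<^sub>m c q) k" using k by (auto intro!: eq_vecI)
qed (use D in simp_all)

lemma normal_equation_unique: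
  fixes A :: "complex mat"
  assumes A: "A \<in> carrier_mat r c" and ker: "trivial_kernel A" and B: "B \<in> carrier_mat r q"
    and Y1: "Y1 \<in> carrier_mat c q" and Y2: "Y2 \<in> carrier_mat c q"
    and N1: "mat_adjoint A * (A * Y1 - B) = 0\<^sub>m c q"
    and N2: "mat_adjoint A * (A * Y2 - B) = 0\<^sub>m c q"
  shows "Y1 = Y2"
proof -
  define D where "D = Y1 - Y2"
  have D: "D \<in> carrier_mat c q" using Y2 by (simp add: D_def minus_carrier_mat)
  have AD: "A * D = (A * Y1 - B) - (A * Y2 - B)"
    using A B Y1 Y2 by (intro eq_matI) (auto simp: D_def mult_minus_distrib_mat[OF A Y1 Y2])
  have "mat_adjoint A * (A * D) = 0\<^sub>m c q"
    unfolding AD using mat_adjoint_carrier[OF A] A B Y1 Y2 N1 N2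
    by (subst mult_minus_distrib_mat[of _ c r]) (auto simp: minus_carrier_mat)
  then have "frob_inner (A * D) (A * D) = 0"
    using frob_inner_mult_right[OF _ A D, of "A * D"] A D by (simp add: frob_inner_def)
  then have "A * D = 0\<^sub>m r q"
    using frob_sq_eq_0_iff[of "A * D" r q] A D by (simp add: frob_sq_eq_Re_frob_inner)
  then have "D = 0\<^sub>m c q" by (rule mult_eq_0_imp_eq_0[OF A ker D])
  then have "\<forall>i<c. \<forall>k<q. Y1 $$ (i,k) - Y2 $$ (i,k) = 0" using Y1 Y2 by (auto simp: D_def mat_eq_iff)
  then show ?thesis using Y1 Y2 by (intro eq_matI) auto
qed

lemma lead_sub_carrier[simp]: "lead_sub M r c \<in> carrier_mat r c"
  by (simp add: lead_sub_def)

lemma lead_sub_index[simp]: "i < r \<Longrightarrow> k < c \<Longrightarrow> lead_sub M r c $$ (i,k) = M $$ (i,k)"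
  by (simp add: lead_sub_def)

lemma lead_sub_dims[simp]: "dim_row (lead_sub M r c) = r" "dim_col (lead_sub M r c) = c"
  by (simp_all add: lead_sub_def)

lemma Emat_carrier[simp]: "Emat L m \<in> carrier_mat (m * L) L"
  by (simp add: Emat_def)

lemma index_Emat_mult:
  assumes S: "S \<in> carrier_mat L L" and i: "i < m * L" and k: "k < L"
  shows "(Emat L m * S) $$ (i,k) = (if i < L then S $$ (i,k) else 0)"
proof -
  have "(Emat L m * S) $$ (i,k) = (\<Sum>l<L. (if i = l then 1 else 0) * S $$ (l,k))"
    using index_mult_mat_sum[OF Emat_carrier S i k] i by (simp add: Emat_def)
  also have "\<dots> = (\<Sum>l<L. if l = i then S $$ (l,k) else 0)" by (rule sum.cong) auto
  finally show ?thesis by simp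
qed

lemma index_append_rows_zero:
  "Y \<in> carrier_mat p q \<Longrightarrow> i < p + l \<Longrightarrow> k < q \<Longrightarrow>
   (Y @\<^sub>r 0\<^sub>m l q) $$ (i,k) = (if i < p then Y $$ (i,k) else 0)"
  by (simp add: append_rows_def)

lemma sum_lessThan_truncate:
  assumes "m \<le> (M :: nat)" "\<And>i. m \<le> i \<Longrightarrow> i < M \<Longrightarrow> f i = 0"
  shows "(\<Sum>i<M. f i) = (\<Sum>i<m. f i)"
  by (rule sum.mono_neutral_right) (use assms in auto)

lemma mult_append_rows_zero:
  assumes M: "M \<in> carrier_mat r (p + l)" and Y: "Y \<in> carrier_mat p q"
  shows "M * (Y @\<^sub>r 0\<^sub>m l q) = lead_sub M r p * Y"
proof (rule eq_matI)
  fix i k assume "i < dim_row (lead_sub M r p * Y)" "k < dim_col (lead_sub M r p * Y)"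
  then have i: "i < r" and k: "k < q" using Y by auto
  have YZ: "Y @\<^sub>r 0\<^sub>m l q \<in> carrier_mat (p + l) q" using Y by auto
  have "(M * (Y @\<^sub>r 0\<^sub>m l q)) $$ (i,k) = (\<Sum>c<p + l. M $$ (i,c) * (Y @\<^sub>r 0\<^sub>m l q) $$ (c,k))"
    by (rule index_mult_mat_sum[OF M YZ i k])
  also have "\<dots> = (\<Sum>c<p. M $$ (i,c) * Y $$ (c,k))"
    by (subst sum_lessThan_truncate[of p]) (use Y k in \<open>auto simp: index_append_rows_zero\<close>)
  also have "\<dots> = (lead_sub M r p * Y) $$ (i,k)"
    using index_mult_mat_sum[OF lead_sub_carrier[of M r p] Y i k] i by simp
  finally show "(M * (Y @\<^sub>r 0\<^sub>m l q)) $$ (i,k) = (lead_sub M r p * Y) $$ (i,k)" .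
qed (use M Y in \<open>simp_all add: append_rows_def\<close>)

lemma adjoint_mult_append_rows_zero:
  assumes M: "M \<in> carrier_mat (m + l) c" and R: "R \<in> carrier_mat m q"
  shows "mat_adjoint M * (R @\<^sub>r 0\<^sub>m l q) = mat_adjoint (lead_sub M m c) * R"
proof (rule eq_matI)
  have MH: "mat_adjoint (lead_sub M m c) \<in> carrier_mat c m" by (rule mat_adjoint_carrier) simp
  fix i k assume "i < dim_row (mat_adjoint (lead_sub M m c) * R)"
    "k < dim_col (mat_adjoint (lead_sub M m c) * R)"
  then have i: "i < c" and k: "k < q" using MH R by auto
  have RZ: "R @\<^sub>r 0\<^sub>m l q \<in> carrier_mat (m + l) q" using R by auto
  have "(mat_adjoint M * (R @\<^sub>r 0\<^sub>m l q)) $$ (i,k)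
      = (\<Sum>r<m + l. cnj (M $$ (r,i)) * (R @\<^sub>r 0\<^sub>m l q) $$ (r,k))"
    using index_mult_mat_sum[OF mat_adjoint_carrier[OF M] RZ i k] index_mat_adjoint[OF M i] by simp
  also have "\<dots> = (\<Sum>r<m. cnj (M $$ (r,i)) * R $$ (r,k))"
    by (subst sum_lessThan_truncate[of m]) (use R k in \<open>auto simp: index_append_rows_zero\<close>)
  also have "\<dots> = (mat_adjoint (lead_sub M m c) * R) $$ (i,k)"
    using index_mult_mat_sum[OF MH R i k] index_mat_adjoint[OF lead_sub_carrier[of M m c] i] i
    by (auto intro!: sum.cong)
  finally show "(mat_adjoint M * (R @\<^sub>r 0\<^sub>m l q)) $$ (i,k) = (mat_adjoint (lead_sub M m c) * R) $$ (i,k)" .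
qed (use R mat_adjoint_carrier[OF M] mat_adjoint_carrier[OF lead_sub_carrier[of M m c]]
    in \<open>simp_all add: append_rows_def\<close>)

lemma trivial_kernel_lead_sub:
  fixes M :: "complex mat"
  assumes M: "M \<in> carrier_mat r c" and ker: "trivial_kernel M" and r': "r' \<le> r" and c': "c' \<le> c"
    and zero: "\<And>i k. r' \<le> i \<Longrightarrow> i < r \<Longrightarrow> k < c' \<Longrightarrow> M $$ (i,k) = 0"
  shows "trivial_kernel (lead_sub M r' c')"
proof (rule trivial_kernelI[OF lead_sub_carrier])
  fix x assume x: "x \<in> carrier_vec c'" and Mx: "lead_sub M r' c' *\<^sub>v x = 0\<^sub>v r'"
  define x' where "x' = x @\<^sub>v 0\<^sub>v (c - c')"
  have x': "x' \<in> carrier_vec c"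
    using append_carrier_vec[OF x zero_carrier_vec, of "c - c'"] c' by (simp add: x'_def)
  have "M *\<^sub>v x' = 0\<^sub>v r"
  proof (rule eq_vecI)
    fix i assume "i < dim_vec (0\<^sub>v r :: complex vec)"
    then have i: "i < r" by simp
    have "(M *\<^sub>v x') $ i = (\<Sum>l<c'. M $$ (i,l) * x $ l)"
      using index_mult_mat_vec_sum[OF M x' i] x c'
      by (subst (asm) sum_lessThan_truncate[of c']) (auto simp: x'_def)
    also have "\<dots> = 0"
    proof (cases "i < r'")
      case True
      then have "(\<Sum>l<c'. M $$ (i,l) * x $ l) = (lead_sub M r' c' *\<^sub>v x) $ i"
        using index_mult_mat_vec_sum[OF lead_sub_carrier x True] by simp
      then show ?thesis using Mx True by simp
    qed (use zero i in simp)
    finally show "(M *\<^sub>v x') $ i = 0\<^sub>v r $ i" using i by simp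
  qed (use M in simp)
  then have x'0: "x' = 0\<^sub>v c" by (rule trivial_kernelD[OF ker M x'])
  show "x = 0\<^sub>v c'"
  proof (rule eq_vecI)
    fix i assume "i < dim_vec (0\<^sub>v c' :: complex vec)"
    then have i: "i < c'" by simp
    have "x $ i = x' $ i" using x i by (simp add: x'_def)
    then show "x $ i = 0\<^sub>v c' $ i" using x'0 i c' by simp
  qed (use x in simp)
qed

lemma orthonormal_cols_lead_sub:
  assumes W: "W \<in> carrier_mat n c" and orth: "orthonormal_cols W" and k: "k \<le> c"
  shows "mat_adjoint (lead_sub W n k) * lead_sub W n k = 1\<^sub>m k"
proof (rule eq_matI)
  fix a b assume "a < dim_row (1\<^sub>m k :: complex mat)" "b < dim_col (1\<^sub>m k :: complex mat)"
  then have a: "a < k" and b: "b < k" by auto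
  have "(mat_adjoint (lead_sub W n k) * lead_sub W n k) $$ (a,b) = col W b \<bullet>c col W a"
    using index_mat_adjoint_mult[OF lead_sub_carrier lead_sub_carrier a b] a b k W
    by (auto intro!: arg_cong2[where f = "(\<bullet>c)"] eq_vecI)
  also have "\<dots> = (mat_adjoint W * W) $$ (a,b)"
    using index_mat_adjoint_mult[OF W W] a b k by simp
  also have "\<dots> = 1\<^sub>m k $$ (a,b)" using orth W a b k by (simp add: orthonormal_cols_def)
  finally show "(mat_adjoint (lead_sub W n k) * lead_sub W n k) $$ (a,b) = 1\<^sub>m k $$ (a,b)" .
qed (use mat_adjoint_carrier[OF lead_sub_carrier] in auto)

lemma left_invertible_mult_cancel:
  assumes U: "U \<in> carrier_mat n k" and UU: "mat_adjoint U * U = 1\<^sub>m k"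
    and Y1: "Y1 \<in> carrier_mat k q" and Y2: "Y2 \<in> carrier_mat k q" and eq: "U * Y1 = U * Y2"
  shows "Y1 = Y2"
proof -
  have UH: "mat_adjoint U \<in> carrier_mat k n" by (rule mat_adjoint_carrier[OF U])
  have "Y1 = (mat_adjoint U * U) * Y1" using UU Y1 by simp
  also have "\<dots> = mat_adjoint U * (U * Y2)" using assoc_mult_mat[OF UH U Y1] eq by simp
  also have "\<dots> = Y2" using assoc_mult_mat[OF UH U Y2] UU Y2 by simp
  finally show ?thesis .
qed

section \<open>Stagnation of block GMRES\<close>

locale block_gmres_step =
  fixes n L j :: nat and A B X0 V1 S0 W Hb Yj Yjm1 :: "complex mat"
  assumes L: "L \<ge> 1" and j: "j \<ge> 2"
    and A: "A \<in> carrier_mat n n" and B: "B \<in> carrier_mat n L" and X0: "X0 \<in> carrier_mat n L"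
    and V1: "V1 \<in> carrier_mat n L" and S0: "S0 \<in> carrier_mat L L"
    and QR: "B - A * X0 = V1 * S0"
    and W: "W \<in> carrier_mat n ((j+1)*L)" and W_orth: "orthonormal_cols W"
    and W1: "lead_sub W n L = V1"
    and Hb: "block_hessenberg L j Hb"
    and arnoldi: "A * lead_sub W n (j*L) = W * Hb"
    and Hb_rank: "mrank Hb = j*L"
    and Yj: "lsq_min L Hb S0 j Yj"
    and Yjm1: "lsq_min L Hb S0 (j-1) Yjm1"
    and residual_rank: "mrank (B - A * (X0 + lead_sub W n ((j-1)*L) * Yjm1)) = L"
begin

definition m :: nat where "m = j * L"
definition p :: nat where "p = (j - 1) * L"

(* H is H_j and Hprev is Hbar_{j-1}: the first p columns of H, below which Hb vanishes. *)
definition H :: "complex mat" where "H = lead_sub Hb m m"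
definition Hprev :: "complex mat" where "Hprev = lead_sub Hb m p"
definition Hlast :: "complex mat" where "Hlast = mat m L (\<lambda>(i,k). Hb $$ (i, p + k))"
definition Res :: "complex mat" where "Res = Hprev * Yjm1 - Emat L j * S0"

lemma m_eq_p_add_L: "m = p + L"
  unfolding m_def p_def using j by (cases j) simp_all

lemma p_less_m: "p < m"
  using m_eq_p_add_L L by simp

lemma Suc_j_mult_L: "(j + 1) * L = m + L"
  by (simp add: m_def)

lemma Hb_carrier: "Hb \<in> carrier_mat (m + L) m"
proof -
  have "Hb \<in> carrier_mat ((j + 1) * L) (j * L)" using Hb unfolding block_hessenberg_def by (rule conjunct1)
  then show ?thesis by (simp only: Suc_j_mult_L m_def[symmetric])
qed

lemma H_carrier: "H \<in> carrier_mat m m" and Hprev_carrier: "Hprev \<in> carrier_mat m p"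
  and Hlast_carrier: "Hlast \<in> carrier_mat m L"
  by (simp_all add: H_def Hprev_def Hlast_def)

lemma Yj_carrier: "Yj \<in> carrier_mat m L" and Yjm1_carrier: "Yjm1 \<in> carrier_mat p L"
  using Yj Yjm1 by (simp_all add: lsq_min_def m_def p_def)

lemma Emat_S0_carrier: "Emat L j * S0 \<in> carrier_mat m L"
  and Emat_Suc_S0_carrier: "Emat L (j + 1) * S0 \<in> carrier_mat (m + L) L"
  using mult_carrier_mat[OF Emat_carrier[of L j] S0] mult_carrier_mat[OF Emat_carrier[of L "j + 1"] S0]
  by (simp_all only: Suc_j_mult_L m_def[symmetric])

lemma Res_carrier: "Res \<in> carrier_mat m L"
  using Emat_S0_carrier by (simp add: Res_def minus_carrier_mat)

lemma Hb_zero_below: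
  assumes r: "m \<le> r" "r < m + L" and c: "c < p"
  shows "Hb $$ (r,c) = 0"
proof -
  have "j \<le> r div L" using r(1) L by (simp add: m_def less_eq_div_iff_mult_less_eq)
  moreover have "c div L < j - 1" using c L by (simp add: p_def div_less_iff_less_mult)
  moreover have "r < (j+1)*L" "c < j*L" using r c p_less_m by (auto simp: m_def)
  ultimately show ?thesis using Hb unfolding block_hessenberg_def by auto
qed

lemma H_eq_append_cols: "H = Hprev @\<^sub>c Hlast"
  using m_eq_p_add_L by (intro eq_matI) (auto simp: H_def Hprev_def Hlast_def append_cols_def)

lemma Hb_trivial_kernel: "trivial_kernel Hb"
  using vec_space.rank_eq_dim_col_iff_trivial_kernel[OF Hb_carrier] Hb_rank Hb_carrier
  by (simp add: mrank_def m_def)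

lemma Hprev_trivial_kernel: "trivial_kernel Hprev"
  unfolding Hprev_def
  by (rule trivial_kernel_lead_sub[OF Hb_carrier Hb_trivial_kernel])
     (use p_less_m Hb_zero_below in auto)

lemma Hprev_normal_equation: "mat_adjoint Hprev * Res = 0\<^sub>m p L"
proof -
  have "lead_sub Hb ((j - 1 + 1) * L) ((j - 1) * L) = Hprev"
    using j by (simp add: Hprev_def m_def p_def)
  then have "\<forall>Y' \<in> carrier_mat p L.
      frob_sq (Hprev * Yjm1 - Emat L j * S0) \<le> frob_sq (Hprev * Y' - Emat L j * S0)"
    using Yjm1 j unfolding lsq_min_def p_def by simp
  then show ?thesis unfolding Res_def
    by (rule frob_min_imp_normal_equation[OF Hprev_carrier Emat_S0_carrier Yjm1_carrier])
qed

lemma Hb_normal_equation: "mat_adjoint Hb * (Hb * Yj - Emat L (j + 1) * S0) = 0\<^sub>m m L"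
proof -
  have "lead_sub Hb ((j + 1) * L) (j * L) = Hb"
    using Hb_carrier by (intro eq_matI) (auto simp: m_def)
  then have "\<forall>Y' \<in> carrier_mat m L.
      frob_sq (Hb * Yj - Emat L (j + 1) * S0) \<le> frob_sq (Hb * Y' - Emat L (j + 1) * S0)"
    using Yj unfolding lsq_min_def m_def by simp
  then show ?thesis
    by (rule frob_min_imp_normal_equation[OF Hb_carrier Emat_Suc_S0_carrier Yj_carrier])
qed

definition Ypad :: "complex mat" where "Ypad = Yjm1 @\<^sub>r 0\<^sub>m L L"

lemma Ypad_carrier: "Ypad \<in> carrier_mat m L"
  using Yjm1_carrier m_eq_p_add_L by (auto simp: Ypad_def)

lemma Hb_Ypad_residual: "Hb * Ypad - Emat L (j + 1) * S0 = Res @\<^sub>r 0\<^sub>m L L"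
proof (rule eq_matI)
  have Hb': "Hb \<in> carrier_mat (m + L) (p + L)" using Hb_carrier m_eq_p_add_L by simp
  fix r k assume "r < dim_row (Res @\<^sub>r 0\<^sub>m L L)" "k < dim_col (Res @\<^sub>r 0\<^sub>m L L)"
  then have r: "r < m + L" and k: "k < L" using Res_carrier by (auto simp: append_rows_def)
  have HY: "(Hb * Ypad) $$ (r,k) = (\<Sum>c<p. Hb $$ (r,c) * Yjm1 $$ (c,k))"
    using mult_append_rows_zero[OF Hb' Yjm1_carrier]
      index_mult_mat_sum[OF lead_sub_carrier[of Hb "m + L" p] Yjm1_carrier r k] r
    by (simp add: Ypad_def)
  have ES: "(Emat L (j + 1) * S0) $$ (r,k) = (if r < L then S0 $$ (r,k) else 0)"
    using index_Emat_mult[OF S0 _ k, of r "j + 1"] r Suc_j_mult_L by simp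
  have "(Hb * Ypad - Emat L (j + 1) * S0) $$ (r,k) = (Hb * Ypad) $$ (r,k) - (Emat L (j + 1) * S0) $$ (r,k)"
    using carrier_matD[OF Emat_Suc_S0_carrier] r k by simp
  also have "\<dots> = (Res @\<^sub>r 0\<^sub>m L L) $$ (r,k)"
  proof (cases "r < m")
    case True
    have "(Hprev * Yjm1) $$ (r,k) = (\<Sum>c<p. Hb $$ (r,c) * Yjm1 $$ (c,k))"
      using index_mult_mat_sum[OF Hprev_carrier Yjm1_carrier True k] True by (simp add: Hprev_def)
    moreover have "(Emat L j * S0) $$ (r,k) = (if r < L then S0 $$ (r,k) else 0)"
      using index_Emat_mult[OF S0 _ k, of r j] True by (simp add: m_def)
    ultimately show ?thesis
      using True k HY ES Res_carrier carrier_matD[OF Emat_S0_carrier]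
      by (simp add: index_append_rows_zero Res_def)
  next
    case False
    then show ?thesis
      using HY ES r k m_eq_p_add_L Res_carrier Hb_zero_below by (simp add: index_append_rows_zero)
  qed
  finally show "(Hb * Ypad - Emat L (j + 1) * S0) $$ (r,k) = (Res @\<^sub>r 0\<^sub>m L L) $$ (r,k)" .
qed (use Hb_carrier Ypad_carrier carrier_matD[OF Emat_Suc_S0_carrier] Res_carrier
    in \<open>simp_all add: append_rows_def\<close>)

lemma Yj_eq_Ypad_iff: "Yj = Ypad \<longleftrightarrow> mat_adjoint H * Res = 0\<^sub>m m L"
proof -
  have pad: "mat_adjoint Hb * (Hb * Ypad - Emat L (j + 1) * S0) = mat_adjoint H * Res"
    unfolding Hb_Ypad_residual H_def by (rule adjoint_mult_append_rows_zero[OF Hb_carrier Res_carrier])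
  show ?thesis
  proof
    assume "Yj = Ypad"
    then show "mat_adjoint H * Res = 0\<^sub>m m L" using Hb_normal_equation pad by simp
  next
    assume "mat_adjoint H * Res = 0\<^sub>m m L"
    then show "Yj = Ypad"
      using normal_equation_unique[OF Hb_carrier Hb_trivial_kernel Emat_Suc_S0_carrier Yj_carrier
          Ypad_carrier Hb_normal_equation] pad
      by simp
  qed
qed

lemma lead_sub_W_Ypad: "lead_sub W n m * Ypad = lead_sub W n p * Yjm1"
proof -
  have "lead_sub W n m \<in> carrier_mat n (p + L)" using m_eq_p_add_L by simp
  moreover have "lead_sub (lead_sub W n m) n p = lead_sub W n p"
    using p_less_m by (intro eq_matI) auto
  ultimately show ?thesis using mult_append_rows_zero[OF _ Yjm1_carrier] by (simp add: Ypad_def)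
qed

lemma stagnation_iff_Yj_eq_Ypad:
  "X0 + lead_sub W n m * Yj = X0 + lead_sub W n p * Yjm1 \<longleftrightarrow> Yj = Ypad"
proof -
  have "X0 + lead_sub W n m * Yj = X0 + lead_sub W n m * Ypad \<longleftrightarrow>
        lead_sub W n m * Yj = lead_sub W n m * Ypad"
    using X0 Yj_carrier Ypad_carrier by (auto simp: mat_eq_iff)
  also have "\<dots> \<longleftrightarrow> Yj = Ypad"
    using left_invertible_mult_cancel[OF lead_sub_carrier orthonormal_cols_lead_sub[OF W W_orth]
        Yj_carrier Ypad_carrier] Suc_j_mult_L by auto
  finally show ?thesis by (simp only: lead_sub_W_Ypad)
qed

lemma arnoldi_prev: "A * lead_sub W n p = lead_sub W n m * Hprev"
proof (rule eq_matI)
  have W': "W \<in> carrier_mat n (m + L)" using W by (simp only: Suc_j_mult_L)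
  fix i c assume "i < dim_row (lead_sub W n m * Hprev)" "c < dim_col (lead_sub W n m * Hprev)"
  then have i: "i < n" and c: "c < p" using Hprev_carrier by auto
  have cm: "c < m" using c p_less_m by simp
  have "(A * lead_sub W n p) $$ (i,c) = (A * lead_sub W n m) $$ (i,c)"
    using index_mult_mat_sum[OF A lead_sub_carrier i c] index_mult_mat_sum[OF A lead_sub_carrier i cm] c cm
    by simp
  also have "\<dots> = (W * Hb) $$ (i,c)" using arnoldi by (simp add: m_def)
  also have "\<dots> = (\<Sum>r<m. W $$ (i,r) * Hb $$ (r,c))"
    using index_mult_mat_sum[OF W' Hb_carrier i cm] Hb_zero_below c
    by (subst (asm) sum_lessThan_truncate[of m]) auto
  also have "\<dots> = (lead_sub W n m * Hprev) $$ (i,c)"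
    using index_mult_mat_sum[OF lead_sub_carrier Hprev_carrier i c] i c cm
    by (auto simp: Hprev_def intro!: sum.cong)
  finally show "(A * lead_sub W n p) $$ (i,c) = (lead_sub W n m * Hprev) $$ (i,c)" .
qed (use A Hprev_carrier in auto)

lemma V1_S0_eq: "V1 * S0 = lead_sub W n m * (Emat L j * S0)"
proof (rule eq_matI)
  fix i k assume "i < dim_row (lead_sub W n m * (Emat L j * S0))"
    "k < dim_col (lead_sub W n m * (Emat L j * S0))"
  then have i: "i < n" and k: "k < L" using Emat_S0_carrier by auto
  have "(lead_sub W n m * (Emat L j * S0)) $$ (i,k) = (\<Sum>c<m. W $$ (i,c) * (Emat L j * S0) $$ (c,k))"
    using index_mult_mat_sum[OF lead_sub_carrier Emat_S0_carrier i k] i by (auto intro!: sum.cong)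
  also have "\<dots> = (\<Sum>c<m. W $$ (i,c) * (if c < L then S0 $$ (c,k) else 0))"
    using index_Emat_mult[OF S0 _ k, of _ j] by (intro sum.cong) (auto simp: m_def)
  also have "\<dots> = (\<Sum>c<L. W $$ (i,c) * S0 $$ (c,k))"
    using m_eq_p_add_L by (subst sum_lessThan_truncate[of L]) auto
  also have "\<dots> = (V1 * S0) $$ (i,k)"
    using index_mult_mat_sum[OF V1 S0 i k] W1[symmetric] i by (auto intro!: sum.cong)
  finally show "(V1 * S0) $$ (i,k) = (lead_sub W n m * (Emat L j * S0)) $$ (i,k)" by simp
qed (use V1 S0 Emat_S0_carrier in auto)

lemma residual_prev_eq: "B - A * (X0 + lead_sub W n p * Yjm1) = - (lead_sub W n m * Res)"
proof -
  define Wm where "Wm = lead_sub W n m"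
  define P where "P = Wm * (Hprev * Yjm1)"
  define Q where "Q = Wm * (Emat L j * S0)"
  have Wm: "Wm \<in> carrier_mat n m" by (simp add: Wm_def)
  have HY: "Hprev * Yjm1 \<in> carrier_mat m L" using Hprev_carrier Yjm1_carrier by simp
  have WY: "lead_sub W n p * Yjm1 \<in> carrier_mat n L"
    by (rule mult_carrier_mat[OF lead_sub_carrier Yjm1_carrier])
  have P: "P \<in> carrier_mat n L" and Q: "Q \<in> carrier_mat n L"
    using Wm HY Emat_S0_carrier by (simp_all add: P_def Q_def)
  have AXW: "A * (X0 + lead_sub W n p * Yjm1) = A * X0 + P"
    using mult_add_distrib_mat[OF A X0 WY]
      assoc_mult_mat[OF A lead_sub_carrier[of W n p] Yjm1_carrier] arnoldi_prev
      assoc_mult_mat[OF Wm Hprev_carrier Yjm1_carrier]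
    by (simp add: Wm_def P_def)
  have WRes: "Wm * Res = P - Q"
    unfolding Res_def P_def Q_def by (rule mult_minus_distrib_mat[OF Wm HY Emat_S0_carrier])
  have BAX: "B - A * X0 = Q" using QR V1_S0_eq by (simp add: Wm_def Q_def)
  show ?thesis
    unfolding Wm_def[symmetric] AXW WRes
  proof (rule eq_matI)
    fix i k assume "i < dim_row (- (P - Q))" "k < dim_col (- (P - Q))"
    then have i: "i < n" and k: "k < L" using P Q by auto
    have "(B - A * X0) $$ (i,k) = Q $$ (i,k)" using BAX by simp
    then show "(B - (A * X0 + P)) $$ (i,k) = (- (P - Q)) $$ (i,k)"
      using i k carrier_matD[OF A] carrier_matD[OF B] carrier_matD[OF X0]
        carrier_matD[OF P] carrier_matD[OF Q]
      by simp
  qed (use B P Q in simp_all)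
qed

lemma Res_trivial_kernel: "trivial_kernel Res"
proof (rule trivial_kernelI[OF Res_carrier])
  define F where "F = B - A * (X0 + lead_sub W n p * Yjm1)"
  have F: "F \<in> carrier_mat n L"
    using A X0 mult_carrier_mat[OF lead_sub_carrier[of W n p] Yjm1_carrier]
    by (simp add: F_def minus_carrier_mat)
  have kF: "trivial_kernel F"
    using vec_space.rank_eq_dim_col_iff_trivial_kernel[OF F] residual_rank carrier_matD[OF A]
    by (simp add: F_def mrank_def p_def)
  fix x assume x: "x \<in> carrier_vec L" and Rx: "Res *\<^sub>v x = 0\<^sub>v m"
  have "F *\<^sub>v x = - (lead_sub W n m *\<^sub>v (Res *\<^sub>v x))"
    using residual_prev_eq assoc_mult_mat_vec[OF lead_sub_carrier Res_carrier x] Res_carrier x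
    by (simp add: F_def)
  also have "\<dots> = 0\<^sub>v n" unfolding Rx by (auto intro!: eq_vecI)
  finally show "x = 0\<^sub>v L" by (rule trivial_kernelD[OF kF F x])
qed

theorem singular_rank_iff_stagnation:
  "(\<not> invertible_mat (lead_sub Hb (j*L) (j*L)) \<and> mrank (lead_sub Hb (j*L) (j*L)) = (j-1)*L)
   \<longleftrightarrow> X0 + lead_sub W n (j*L) * Yj = X0 + lead_sub W n ((j-1)*L) * Yjm1"
proof -
  have rank_iff: "mrank H = p \<longleftrightarrow> mat_adjoint H * Res = 0\<^sub>m m L"
    using rank_append_cols_iff_adjoint_mult_eq_0[OF Hprev_carrier Res_carrier Hlast_carrier
        m_eq_p_add_L[symmetric] Hprev_trivial_kernel Res_trivial_kernel Hprev_normal_equation]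
      m_eq_p_add_L carrier_matD[OF Hprev_carrier] by (simp add: mrank_def H_eq_append_cols)
  have "\<not> invertible_mat H" if "mrank H = p"
  proof
    assume "invertible_mat H"
    then have "mrank H = m"
      using vec_space.rank_eq_dim_col_iff_trivial_kernel[OF H_carrier]
        invertible_mat_trivial_kernel[OF H_carrier] H_carrier
      by (simp add: mrank_def)
    then show False using that p_less_m by simp
  qed
  then show ?thesis
    unfolding m_def[symmetric] p_def[symmetric] H_def[symmetric]
    using rank_iff Yj_eq_Ypad_iff stagnation_iff_Yj_eq_Ypad by blast
qed

end

theorem mainTheorem6:
  fixes n L j :: nat
    and A B X0 V1 S0 W Hb Yj Yjm1 :: "complex mat"
  assumes "n \<ge> 1" and "L \<ge> 1" and "j \<ge> 2"
    and A: "A \<in> carrier_mat n n"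
    and B: "B \<in> carrier_mat n L"
    and X0: "X0 \<in> carrier_mat n L"
    and V1: "V1 \<in> carrier_mat n L" and "orthonormal_cols V1"
    and S0: "S0 \<in> carrier_mat L L" and "upper_triangular S0"
    and QR: "B - A * X0 = V1 * S0"
    and W: "W \<in> carrier_mat n ((j+1)*L)" and "orthonormal_cols W"
    and W1: "lead_sub W n L = V1"
    and Hb: "block_hessenberg L j Hb"
    and arnoldi: "A * lead_sub W n (j*L) = W * Hb"
    and fullrank: "mrank Hb = j*L"
    and Yj: "lsq_min L Hb S0 j Yj"
    and Yjm1: "lsq_min L Hb S0 (j-1) Yjm1"
    and resrank: "mrank (B - A * (X0 + lead_sub W n ((j-1)*L) * Yjm1)) = L"
  shows "(\<not> invertible_mat (lead_sub Hb (j*L) (j*L)) \<and>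
          mrank (lead_sub Hb (j*L) (j*L)) = (j-1)*L)
         \<longleftrightarrow> X0 + lead_sub W n (j*L) * Yj = X0 + lead_sub W n ((j-1)*L) * Yjm1"
proof -
  interpret block_gmres_step n L j A B X0 V1 S0 W Hb Yj Yjm1
    by unfold_locales (fact assms)+
  show ?thesis by (rule singular_rank_iff_stagnation)
qed

end
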